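(* Let $q_3\in\{1,2,4\}$, let $p_4>q_4>0$ be coprime with $\gcd(p_4,30)=1$, and let $T=\{(2,1),(3,2),(5,q_3),(p_4,q_4)\}$ satisfy $0<K^2(T)\le 3e_{\mathrm{orb}}(T)$. Write $p_4/(p_4-q_4)=[n_1,\dots,n_\ell]$. Then $\sum_{j=1}^\ell n_j-3\ell\in\{-2,-3\}$ if $q_3=1$, $\in\{-4,-5\}$ if $q_3=2$, and $\in\{-7,-8\}$ if $q_3=4$.
   Context: Hirzebruch–Jung continued fraction: $[a_1,\dots,a_\ell]=a_1-1/(a_2-1/(\cdots-1/a_\ell))$, $a_i\ge 2$. For a type $T=\{(p_i,q_i)\}_{i=1}^4$ write $p_i/(p_i-q_i)=[n_{i,1},\dots,n_{i,\ell_i}]$, $L=\sum\ell_i$, $q_i^{-1}$ the inverse of $q_i$ mod $p_i$ in $(0,p_i)$; $K^2(T)=9-3L+\sum_{i,j}n_{i,j}-\sum_i\frac{q_i+q_i^{-1}-2}{p_i}$ and $e_{\mathrm{orb}}(T)=3-\sum_i(1-1/p_i)$ (so here $3e_{\mathrm{orb}}(T)=\frac1{10}+\frac3{p_4}$). *)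

theory Defs
  imports Complex_Main
begin

text \<open>Hirzebruch--Jung continued fraction expansion of the rational number p/r > 1:
  hj p r = [a_1,...,a_l] with a_i >= 2 and p/r = a_1 - 1/(a_2 - 1/(... - 1/a_l)).  Returns [] for invalid input (r = 0 or p <= r).\<close>

function hj :: "nat \<Rightarrow> nat \<Rightarrow> nat list" where
  "hj p r = (if r = 0 \<or> p \<le> r then []
             else (let a = (p + r - 1) div r in
                   if a * r = p then [a] else a # hj r (a * r - p)))"
  by pat_completeness auto
termination
proof (relation "measure snd")
  fix p r a :: nat
  assume h: "\<not> (r = 0 \<or> p \<le> r)" "a = (p + r - 1) div r" "a * r \<noteq> p"
  have "a * r \<le> p + r - 1" using h using div_times_less_eq_dividend[of "p + r - 1" r] by simp
  then have "a * r - p < r" using h by linarith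
  then show "((r, a * r - p), p, r) \<in> measure snd" by simp
qed auto

fun hj_val :: "nat list \<Rightarrow> real" where
  "hj_val [] = 0"
| "hj_val [a] = real a"
| "hj_val (a # b # rest) = real a - 1 / hj_val (b # rest)"

definition qinv :: "nat \<Rightarrow> nat \<Rightarrow> nat" where
  "qinv p q = (THE x. 0 < x \<and> x < p \<and> (q * x) mod p = 1 mod p)"

definition hjT :: "nat \<times> nat \<Rightarrow> nat list" where
  "hjT pq = hj (fst pq) (fst pq - snd pq)"

definition K2 :: "(nat \<times> nat) list \<Rightarrow> real" where
  "K2 T = 9 - 3 * real (\<Sum>pq\<leftarrow>T. length (hjT pq))
            + real (\<Sum>pq\<leftarrow>T. sum_list (hjT pq))
            - (\<Sum>pq\<leftarrow>T. (real (snd pq) + real (qinv (fst pq) (snd pq)) - 2) / real (fst pq))"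

definition e_orb :: "(nat \<times> nat) list \<Rightarrow> real" where
  "e_orb T = 3 - (\<Sum>pq\<leftarrow>T. 1 - 1 / real (fst pq))"

end

theory Submission
  imports Defs "HOL-Number_Theory.Cong"
begin

text \<open>\<open>K\<^sup>2\<close> is \<open>9\<close> plus one local contribution per cyclic quotient singularity, namely the
  defect \<open>\<Sum>n\<^sub>j - 3\<ell>\<close> of its Hirzebruch--Jung expansion minus \<open>(q + q\<^sup>-\<^sup>1 - 2)/p\<close>.
  The three contributions of \<open>(2,1), (3,2), (5,q\<^sub>3)\<close> are explicit numbers, and that of
  \<open>(p\<^sub>4,q\<^sub>4)\<close> lies within \<open>[-2 + 4/p\<^sub>4, 1/p\<^sub>4]\<close> of its defect because \<open>0 < q\<^sub>4, q\<^sub>4\<^sup>-\<^sup>1 < p\<^sub>4\<close>.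
  Since \<open>p\<^sub>4 \<ge> 7\<close>, the window \<open>0 < K\<^sup>2 \<le> 1/10 + 3/p\<^sub>4\<close> then confines the integer defect
  to an open interval of length less than \<open>3\<close>, leaving two values.\<close>

lemma qinv_eqI:
  assumes "coprime p q" "0 < x" "x < p" "(q * x) mod p = 1 mod p"
  shows "qinv p q = x"
  unfolding qinv_def
proof (rule the_equality)
  show "0 < x \<and> x < p \<and> q * x mod p = 1 mod p" using assms by auto
next
  fix y assume y: "0 < y \<and> y < p \<and> q * y mod p = 1 mod p"
  then have "[q * y = q * x] (mod p)" using assms unfolding cong_def by simp
  then have "[y = x] (mod p)"
    using assms(1) cong_mult_lcancel_nat by (metis coprime_commute)
  then show "y = x" using y assms unfolding cong_def by simp
qed

lemma qinv_less:
  assumes "1 < p" "coprime p q"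
  shows "qinv p q < p"
proof -
  obtain x where x: "[q * x = 1] (mod p)"
    using cong_solve_coprime_nat[of q p] assms(2) by (auto simp: coprime_commute)
  define y where "y = x mod p"
  have y: "[q * y = 1] (mod p)" using x unfolding y_def cong_def by (simp add: mod_mult_right_eq)
  moreover have "y \<noteq> 0" using y assms(1) unfolding cong_def by (auto intro: Nat.gr0I)
  moreover have "y < p" using assms(1) unfolding y_def by simp
  ultimately show ?thesis using qinv_eqI[of p q y] assms(2) unfolding cong_def by simp
qed

lemma coprime_30_imp_ge_7:
  fixes p :: nat
  assumes "gcd p 30 = 1" "1 < p"
  shows "7 \<le> p"
proof (rule ccontr)
  assume "\<not> 7 \<le> p"
  then have "p \<in> {2, 3, 4, 5, 6}" using assms(2) by auto
  then have "2 dvd p \<or> 3 dvd p \<or> 5 dvd p" by auto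
  then have "2 dvd gcd p 30 \<or> 3 dvd gcd p 30 \<or> 5 dvd gcd p 30" by auto
  then show False using assms(1) by auto
qed

definition hj_defect :: "nat \<times> nat \<Rightarrow> int" where
  "hj_defect pq = int (sum_list (hjT pq)) - 3 * int (length (hjT pq))"

definition K2_contrib :: "nat \<times> nat \<Rightarrow> real" where
  "K2_contrib pq = of_int (hj_defect pq)
     - (real (snd pq) + real (qinv (fst pq) (snd pq)) - 2) / real (fst pq)"

lemma K2_eq_sum_K2_contrib: "K2 T = 9 + (\<Sum>pq\<leftarrow>T. K2_contrib pq)"
  unfolding K2_def K2_contrib_def hj_defect_def
  by (induction T) (simp_all del: hj.simps add: algebra_simps)

lemma three_e_orb: "3 * e_orb [(2,1), (3,2), (5,q3), (p,q)] = 1/10 + 3 / real p"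
  unfolding e_orb_def by simp

lemma K2_contrib_values:
  "K2_contrib (2,1) = -1" "K2_contrib (3,2) = -2/3"
  "K2_contrib (5,1) = -4" "K2_contrib (5,2) = -8/5" "K2_contrib (5,4) = 4/5"
proof -
  have "qinv 2 1 = 1" "qinv 3 2 = 2" "qinv 5 1 = 1" "qinv 5 2 = 3" "qinv 5 4 = 4"
    by (rule qinv_eqI; simp add: coprime_Suc_left_nat[of 4, simplified])+
  then show "K2_contrib (2,1) = -1" "K2_contrib (3,2) = -2/3"
    "K2_contrib (5,1) = -4" "K2_contrib (5,2) = -8/5" "K2_contrib (5,4) = 4/5"
    by (simp_all add: K2_contrib_def hj_defect_def hjT_def)
qed

lemma K2_contrib_bounds:
  assumes "1 < p" "coprime p q" "0 < q" "q < p"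
  shows "of_int (hj_defect (p,q)) - 2 + 4 / real p \<le> K2_contrib (p,q)"
    and "K2_contrib (p,q) \<le> of_int (hj_defect (p,q)) + 1 / real p"
proof -
  define num where "num = real q + real (qinv p q) - 2"
  have "qinv p q < p" using qinv_less assms(1,2) .
  then have lo: "-1 \<le> num" and hi: "num \<le> 2 * real p - 4"
    using assms(3,4) unfolding num_def by linarith+
  have "-1 / real p \<le> num / real p" using lo by (rule divide_right_mono) simp
  moreover have "num / real p \<le> (2 * real p - 4) / real p" using hi by (rule divide_right_mono) simp
  moreover have "(2 * real p - 4) / real p = 2 - 4 / real p"
    using assms(1) by (simp add: diff_divide_distrib)
  ultimately show "of_int (hj_defect (p,q)) - 2 + 4 / real p \<le> K2_contrib (p,q)"
    "K2_contrib (p,q) \<le> of_int (hj_defect (p,q)) + 1 / real p"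
    unfolding K2_contrib_def num_def by simp_all
qed

lemma hj_defect_window:
  fixes p q q3 :: nat
  assumes "gcd p 30 = 1" "coprime p q" "0 < q" "q < p"
    and "0 < K2 [(2,1), (3,2), (5,q3), (p,q)]"
    and "K2 [(2,1), (3,2), (5,q3), (p,q)] \<le> 3 * e_orb [(2,1), (3,2), (5,q3), (p,q)]"
  shows "- 22/3 - K2_contrib (5,q3) - 1/7 < of_int (hj_defect (p,q))"
    and "of_int (hj_defect (p,q)) < 21/10 - 22/3 - K2_contrib (5,q3)"
proof -
  define u where "u = 1 / real p"
  have "1 < p" using assms(3,4) by simp
  then have "0 < u" "u \<le> 1 / 7" using coprime_30_imp_ge_7[OF assms(1)] unfolding u_def by simp_all
  moreover have "K2 [(2,1), (3,2), (5,q3), (p,q)] = 22/3 + K2_contrib (5,q3) + K2_contrib (p,q)"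
    unfolding K2_eq_sum_K2_contrib list.map K2_contrib_values by simp
  moreover have "3 * e_orb [(2,1), (3,2), (5,q3), (p,q)] = 1/10 + 3 * u"
    unfolding three_e_orb u_def by simp
  moreover have "of_int (hj_defect (p,q)) - 2 + 4 * u \<le> K2_contrib (p,q)"
    "K2_contrib (p,q) \<le> of_int (hj_defect (p,q)) + u"
    using K2_contrib_bounds[OF \<open>1 < p\<close> assms(2-4)] unfolding u_def by simp_all
  ultimately show "- 22/3 - K2_contrib (5,q3) - 1/7 < of_int (hj_defect (p,q))"
    and "of_int (hj_defect (p,q)) < 21/10 - 22/3 - K2_contrib (5,q3)"
    using assms(5,6) by linarith+
qed

theorem mainTheorem13:
  fixes q3 p4 q4 :: nat
  assumes "q3 \<in> {1, 2, 4}"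
    and "0 < q4" and "q4 < p4"
    and "coprime p4 q4"
    and "gcd p4 30 = 1"
    and "0 < K2 [(2,1), (3,2), (5,q3), (p4,q4)]"
    and "K2 [(2,1), (3,2), (5,q3), (p4,q4)] \<le> 3 * e_orb [(2,1), (3,2), (5,q3), (p4,q4)]"
  shows "(let ns = hj p4 (p4 - q4);
              s = int (sum_list ns) - 3 * int (length ns)
          in (q3 = 1 \<longrightarrow> s \<in> {-2, -3})
           \<and> (q3 = 2 \<longrightarrow> s \<in> {-4, -5})
           \<and> (q3 = 4 \<longrightarrow> s \<in> {-7, -8}))"
proof -
  define s where "s = hj_defect (p4,q4)"
  note window = hj_defect_window[OF assms(5,4,2,3,6,7), folded s_def]
  have "(q3 = 1 \<longrightarrow> s \<in> {-2, -3}) \<and> (q3 = 2 \<longrightarrow> s \<in> {-4, -5}) \<and> (q3 = 4 \<longrightarrow> s \<in> {-7, -8})"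
  proof (intro conjI impI)
    assume "q3 = 1"
    then have "-4 < real_of_int s" "real_of_int s < -1"
      using window unfolding \<open>q3 = 1\<close> K2_contrib_values by linarith+
    then show "s \<in> {-2, -3}" by auto
  next
    assume "q3 = 2"
    then have "-6 < real_of_int s" "real_of_int s < -3"
      using window unfolding \<open>q3 = 2\<close> K2_contrib_values by linarith+
    then show "s \<in> {-4, -5}" by auto
  next
    assume "q3 = 4"
    then have "-9 < real_of_int s" "real_of_int s < -6"
      using window unfolding \<open>q3 = 4\<close> K2_contrib_values by linarith+
    then show "s \<in> {-7, -8}" by auto
  qed
  then show ?thesis unfolding s_def hj_defect_def hjT_def Let_def by simp
qed
end
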